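(* Let $\omega\colon\mathbf Z_+\to(0,+\infty)$ be a weight which is bounded from below, such that $\omega(k2^n)\to+\infty$ as $n\to+\infty$ for every $k\ge3$, and such that $\mathcal T$ is a bounded operator on $\mathcal X_\omega$. Then $\mathcal T$ is hypercyclic on $\mathcal X_\omega$, i.e. there exists $f\in\mathcal X_\omega$ whose orbit $\{\mathcal T^nf;\ n\ge0\}$ is dense in $\mathcal X_\omega$. In particular, $\mathcal T$ is hypercyclic on $\mathcal X_{\omega_0}$, where $\omega_0(n)=(n+1)/\pi$.
   Context: $T\colon\mathbf Z_+\to\mathbf Z_+$ is the modified Collatz map: $T(n)=n/2$ for $n$ even, $T(n)=(3n+1)/2$ for $n$ odd. $\mathcal X_\omega$ is the Hilbert space of holomorphic functions $f(z)=\sum_{n\ge3}c_nz^n$ on the unit disk with $\|f\|_\omega^2=\sum_{n\ge3}|c_n|^2/\omega(n)<\infty$ (the quotient of the weighted Bergman space $\mathcal B^2_\omega$ by $\mathrm{span}[1,z,z^2]$). $\mathcal T\sum_{n\ge3}c_nz^n=\sum_{j\ge3,\,T(j)\ge3}c_jz^{T(j)}$. $\mathcal T$ is bounded on $\mathcal X_\omega$ iff the sequences $\omega(6m)/\omega(3m)$, $\omega(6m+2)/\omega(3m+1)$, $(\omega(6m+4)+\omega(2m+1))/\omega(3m+2)$ ($m\ge1$) are bounded; this holds for $\omega_0$. *)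

theory Defs
  imports "HOL-Analysis.Analysis"
begin

definition collatz :: "nat \<Rightarrow> nat" where
  "collatz n = (if even n then n div 2 else (3 * n + 1) div 2)"

text \<open>Elements f = sum_{n>=3} c_n z^n of X_omega are represented by their Taylor
  coefficient sequences c (with c n = 0 for n < 3).\<close>
definition Xw :: "(nat \<Rightarrow> real) \<Rightarrow> (nat \<Rightarrow> complex) set" where
  "Xw \<omega> = {c. (\<forall>n<3. c n = 0) \<and> summable (\<lambda>n. (cmod (c n))\<^sup>2 / \<omega> n)}"

definition wnorm :: "(nat \<Rightarrow> real) \<Rightarrow> (nat \<Rightarrow> complex) \<Rightarrow> real" where
  "wnorm \<omega> c = sqrt (\<Sum>n. (cmod (c n))\<^sup>2 / \<omega> n)"

text \<open>The operator: T (sum c_j z^j) = sum_{j>=3, T(j)>=3} c_j z^{T(j)}.\<close>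
definition Top :: "(nat \<Rightarrow> complex) \<Rightarrow> (nat \<Rightarrow> complex)" where
  "Top c m = (if m < 3 then 0 else (\<Sum>j\<in>{j. 3 \<le> j \<and> collatz j = m}. c j))"

definition weight :: "(nat \<Rightarrow> real) \<Rightarrow> bool" where
  "weight \<omega> \<longleftrightarrow> (\<forall>n\<ge>1. \<omega> n > 0)"

definition bounded_below_weight :: "(nat \<Rightarrow> real) \<Rightarrow> bool" where
  "bounded_below_weight \<omega> \<longleftrightarrow> (\<exists>\<delta>>0. \<forall>n\<ge>1. \<delta> \<le> \<omega> n)"

definition Top_bounded :: "(nat \<Rightarrow> real) \<Rightarrow> bool" where
  "Top_bounded \<omega> \<longleftrightarrow> (\<exists>C. \<forall>c\<in>Xw \<omega>. Top c \<in> Xw \<omega>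
      \<and> wnorm \<omega> (Top c) \<le> C * wnorm \<omega> c)"

definition hypercyclic_Top :: "(nat \<Rightarrow> real) \<Rightarrow> bool" where
  "hypercyclic_Top \<omega> \<longleftrightarrow> (\<exists>f\<in>Xw \<omega>. \<forall>g\<in>Xw \<omega>. \<forall>\<epsilon>>0.
      \<exists>n. wnorm \<omega> ((Top ^^ n) f - g) < \<epsilon>)"

definition \<omega>\<^sub>0 :: "nat \<Rightarrow> real" where
  "\<omega>\<^sub>0 n = (real n + 1) / pi"

end

(*
  T has the right inverse S: f(z) |-> f(z^2), and the growth hypothesis gives S^d p -> 0 for
  every polynomial p, because S^d moves the coefficient of z^n to z^(n 2^d). The polynomials
  with Gaussian rational coefficients that are annihilated by a power of T are dense: z^a is
  the average of z^a - z^b over P distinct lifts b = 2^K T^K(a), each annihilated by T^K, up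
  to an error of squared norm at most 1/(P delta) where delta bounds the weight from below.
  Enumerating this countable set as y_0, y_1, ... with every element recurring, and choosing
  n_0 < n_1 < ... with large gaps, the vector f = sum_j S^(n_j) y_j satisfies
  ||T^(n_k) f - y_k|| <= 2^-k. The series converges coefficientwise, which suffices.
*)

theory Submission
  imports Defs
begin

section \<open>The operator T on coefficient sequences\<close>

lemma collatz_double [simp]: "collatz (2 * n) = n"
  by (simp add: collatz_def)

lemma funpow_collatz_pow2_mult [simp]: "(collatz ^^ K) (2 ^ K * n) = n"
  by (induction K arbitrary: n) (simp_all del: funpow.simps add: funpow_Suc_right mult.assoc)

lemma le_double_collatz: "j \<le> 2 * collatz j"
  by (simp add: collatz_def)

lemma collatz_pos: "0 < j \<Longrightarrow> 0 < collatz j"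
  by (auto simp: collatz_def)

lemma funpow_collatz_pos: "0 < j \<Longrightarrow> 0 < (collatz ^^ K) j"
  by (induction K) (simp_all add: collatz_pos)

lemma collatz_less_3: "j < 3 \<Longrightarrow> collatz j < 3"
  by (auto simp: collatz_def numeral_3_eq_3 less_Suc_eq)

lemma finite_collatz_preimage: "finite {j. collatz j = m}"
  by (rule finite_subset[of _ "{..2 * m}"]) (auto intro: le_double_collatz)

definition zero_below_3 :: "(nat \<Rightarrow> complex) \<Rightarrow> bool" where
  "zero_below_3 c \<longleftrightarrow> (\<forall>n<3. c n = 0)"

lemma zero_below_3_Top: "zero_below_3 (Top c)"
  by (simp add: zero_below_3_def Top_def)

lemma zero_below_3_funpow_Top: "zero_below_3 c \<Longrightarrow> zero_below_3 ((Top ^^ n) c)"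
  by (cases n) (simp_all add: zero_below_3_Top)

lemma Top_scale: "Top (\<lambda>m. z * c m) = (\<lambda>m. z * Top c m)"
  by (auto simp: Top_def sum_distrib_left)

lemma Top_sum: "Top (\<lambda>m. \<Sum>i\<in>I. c i m) = (\<lambda>m. \<Sum>i\<in>I. Top (c i) m)"
  by (rule ext) (simp add: Top_def sum.swap[of _ I])

lemma Top_diff: "Top (\<lambda>m. c m - d m) = (\<lambda>m. Top c m - Top d m)"
  by (auto simp: Top_def sum_subtractf)

lemma Top_zero [simp]: "Top (\<lambda>_. 0) = (\<lambda>_. 0)"
  by (auto simp: Top_def)

lemma funpow_Top_scale: "(Top ^^ n) (\<lambda>m. z * c m) = (\<lambda>m. z * (Top ^^ n) c m)"
  by (induction n) (simp_all add: Top_scale)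

lemma funpow_Top_sum: "(Top ^^ n) (\<lambda>m. \<Sum>i\<in>I. c i m) = (\<lambda>m. \<Sum>i\<in>I. (Top ^^ n) (c i) m)"
  by (induction n) (simp_all add: Top_sum)

lemma funpow_Top_diff:
  "(Top ^^ n) (\<lambda>m. c m - d m) = (\<lambda>m. (Top ^^ n) c m - (Top ^^ n) d m)"
  by (induction n) (simp_all add: Top_diff)

lemma funpow_Top_zero [simp]: "(Top ^^ n) (\<lambda>_. 0) = (\<lambda>_. 0)"
  by (induction n) simp_all

lemma funpow_Top_eq_0_mono:
  assumes "(Top ^^ N) c = (\<lambda>_. 0)" and "N \<le> n"
  shows "(Top ^^ n) c = (\<lambda>_. 0)"
proof -
  have "Top ^^ n = Top ^^ (n - N) \<circ> Top ^^ N"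
    using funpow_add[of "n - N" N Top] le_add_diff_inverse2[OF assms(2)] by simp
  then show ?thesis using assms(1) by simp
qed

lemma funpow_Top_local:
  "(\<And>j. j \<le> 2 ^ n * m \<Longrightarrow> c j = d j) \<Longrightarrow> (Top ^^ n) c m = (Top ^^ n) d m"
proof (induction n arbitrary: c d)
  case (Suc n)
  have "Top c j = Top d j" if "j \<le> 2 ^ n * m" for j
    unfolding Top_def
  proof (intro if_cong refl sum.cong)
    fix i assume "i \<in> {i. 3 \<le> i \<and> collatz i = j}"
    then have "i \<le> 2 * j" using le_double_collatz by auto
    also have "\<dots> \<le> 2 ^ Suc n * m" using that by simp
    finally show "c i = d i" using Suc.prems by blast
  qed
  then show ?case using Suc.IH[of "Top c" "Top d"] by (simp only: funpow_Suc_right o_apply)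
qed simp

definition ebasis :: "nat \<Rightarrow> nat \<Rightarrow> complex" where
  "ebasis j m = (if m = j \<and> 3 \<le> j then 1 else 0)"

lemma Top_ebasis: "Top (ebasis j) = ebasis (collatz j)"
proof
  fix m
  let ?S = "{i. 3 \<le> i \<and> collatz i = m}"
  have "finite ?S" by (rule finite_subset[OF _ finite_collatz_preimage[of m]]) auto
  have "(\<Sum>i\<in>?S. ebasis j i) = (\<Sum>i\<in>?S. if j = i then ebasis j j else 0)"
    by (rule sum.cong) (auto simp: ebasis_def)
  also have "\<dots> = (if j \<in> ?S then ebasis j j else 0)"
    using \<open>finite ?S\<close> by (simp only: sum.delta')
  finally have "(\<Sum>i\<in>?S. ebasis j i) = (if j \<in> ?S then ebasis j j else 0)" .
  then show "Top (ebasis j) m = ebasis (collatz j) m"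
    using collatz_less_3[of j] by (cases "3 \<le> j") (auto simp: Top_def ebasis_def)
qed

lemma funpow_Top_ebasis: "(Top ^^ K) (ebasis j) = ebasis ((collatz ^^ K) j)"
  by (induction K) (simp_all add: Top_ebasis)

text \<open>Whether a power of T annihilates the monomial \<open>z\<^sup>a\<close> is the Collatz conjecture for \<open>a\<close>;
  differences along a backward orbit are always annihilated.\<close>
lemma funpow_Top_ebasis_diff: "(Top ^^ K) (\<lambda>m. ebasis a m - ebasis (2 ^ K * (collatz ^^ K) a) m) = (\<lambda>_. 0)"
  by (simp add: funpow_Top_diff funpow_Top_ebasis)

text \<open>The substitution \<open>f(z) \<mapsto> f(z\<^sup>2)\<close>, a right inverse of T.\<close>
definition Ssq :: "(nat \<Rightarrow> complex) \<Rightarrow> nat \<Rightarrow> complex" where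
  "Ssq c m = (if even m then c (m div 2) else 0)"

lemma funpow_Ssq: "(Ssq ^^ d) c m = (if 2 ^ d dvd m then c (m div 2 ^ d) else 0)"
proof (induction d arbitrary: m)
  case (Suc d)
  have "(2::nat) ^ Suc d dvd m \<longleftrightarrow> even m \<and> 2 ^ d dvd m div 2"
    by (auto elim!: evenE simp: mult.commute[of 2])
  moreover have "(Ssq ^^ Suc d) c m = (if even m then (Ssq ^^ d) c (m div 2) else 0)"
    by (simp add: Ssq_def)
  ultimately show ?case by (simp add: Suc.IH div_mult2_eq)
qed simp

lemma funpow_Ssq_eq_0:
  assumes "zero_below_3 c" and "m < 3 * 2 ^ d"
  shows "(Ssq ^^ d) c m = 0"
proof -
  have "m div 2 ^ d < 3" if "2 ^ d dvd m" using that assms(2) by (auto elim!: dvdE)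
  then show ?thesis using assms(1) by (simp add: funpow_Ssq zero_below_3_def)
qed

lemma zero_below_3_funpow_Ssq:
  assumes "zero_below_3 c"
  shows "zero_below_3 ((Ssq ^^ d) c)"
proof -
  have "n < 3 * 2 ^ d" if "n < 3" for n :: nat
    using that one_le_power[of "2::nat" d] by linarith
  then show ?thesis using funpow_Ssq_eq_0[OF assms] by (simp add: zero_below_3_def)
qed

lemma Top_Ssq:
  assumes "zero_below_3 c"
  shows "Top (Ssq c) = c"
proof
  fix m
  let ?S = "{i. 3 \<le> i \<and> collatz i = m}"
  have "finite ?S" by (rule finite_subset[OF _ finite_collatz_preimage[of m]]) auto
  have "(\<Sum>i\<in>?S. Ssq c i) = (\<Sum>i\<in>?S. if 2 * m = i then c m else 0)"
    by (rule sum.cong) (auto simp: Ssq_def collatz_def elim!: evenE)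
  also have "\<dots> = (if 2 * m \<in> ?S then c m else 0)"
    using \<open>finite ?S\<close> by (simp only: sum.delta')
  finally show "Top (Ssq c) m = c m"
    using assms by (auto simp: Top_def zero_below_3_def)
qed

lemma funpow_Top_funpow_Ssq: "zero_below_3 c \<Longrightarrow> (Top ^^ n) ((Ssq ^^ n) c) = c"
proof (induction n)
  case (Suc n)
  have "(Top ^^ Suc n) x = (Top ^^ n) (Top x)" for x
    by (simp only: funpow_Suc_right o_apply)
  then show ?case using Suc by (simp add: Top_Ssq zero_below_3_funpow_Ssq)
qed simp

lemma funpow_Top_funpow_Ssq_le:
  assumes "zero_below_3 c" and "n \<le> d"
  shows "(Top ^^ n) ((Ssq ^^ d) c) = (Ssq ^^ (d - n)) c"
proof -
  have "(Ssq ^^ d) c = (Ssq ^^ n) ((Ssq ^^ (d - n)) c)"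
    using assms(2) by (metis funpow_add le_add_diff_inverse o_apply)
  then show ?thesis using assms(1) by (simp add: funpow_Top_funpow_Ssq zero_below_3_funpow_Ssq)
qed

lemma funpow_Top_funpow_Ssq_ge:
  assumes "zero_below_3 c" and "d \<le> n"
  shows "(Top ^^ n) ((Ssq ^^ d) c) = (Top ^^ (n - d)) c"
proof -
  have "(Top ^^ n) ((Ssq ^^ d) c) = (Top ^^ (n - d)) ((Top ^^ d) ((Ssq ^^ d) c))"
    using assms(2) by (metis funpow_add le_add_diff_inverse2 o_apply)
  then show ?thesis using assms(1) by (simp add: funpow_Top_funpow_Ssq)
qed

section \<open>The weighted space\<close>

lemma zero_below_3_Xw: "c \<in> Xw \<omega> \<Longrightarrow> zero_below_3 c"
  by (simp add: Xw_def zero_below_3_def)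

lemma wnorm_finite_support:
  assumes "finite F" and "\<And>m. m \<notin> F \<Longrightarrow> c m = 0"
  shows "wnorm \<omega> c = sqrt (\<Sum>m\<in>F. (cmod (c m))\<^sup>2 / \<omega> m)"
  unfolding wnorm_def using assms by (subst suminf_finite[of F]) auto

lemma wnorm_minus_commute: "wnorm \<omega> (c - d) = wnorm \<omega> (d - c)"
  by (simp add: wnorm_def fun_diff_def norm_minus_commute)

lemma wnorm_tail_small:
  assumes "g \<in> Xw \<omega>" and "0 < \<epsilon>"
  shows "\<exists>M. wnorm \<omega> (g - (\<lambda>m. if m < M then g m else 0)) < \<epsilon>"
proof -
  let ?t = "\<lambda>m. (cmod (g m))\<^sup>2 / \<omega> m"
  have "summable ?t" using assms(1) by (simp add: Xw_def)
  then obtain M where M: "norm (\<Sum>i. ?t (i + M)) < \<epsilon>\<^sup>2"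
    using suminf_exist_split[of "\<epsilon>\<^sup>2" ?t] assms(2) by auto
  define h where "h = (\<lambda>m. (cmod ((g - (\<lambda>m. if m < M then g m else 0)) m))\<^sup>2 / \<omega> m)"
  have shift: "h (i + M) = ?t (i + M)" for i by (simp add: h_def)
  then have "summable h" using \<open>summable ?t\<close> summable_iff_shift[of h M] summable_iff_shift[of ?t M]
    by simp
  then have "suminf h = (\<Sum>i. ?t (i + M))"
    using suminf_split_initial_segment[of h M] by (simp add: shift h_def)
  then have "wnorm \<omega> (g - (\<lambda>m. if m < M then g m else 0)) = sqrt (\<Sum>i. ?t (i + M))"
    by (simp only: wnorm_def h_def)
  also have "\<dots> < \<epsilon>" using M assms(2) by (intro real_less_lsqrt) auto
  finally show ?thesis ..
qed

lemma wterm_scale: "(cmod (z * c m))\<^sup>2 / \<omega> m = (cmod z)\<^sup>2 * ((cmod (c m))\<^sup>2 / \<omega> m)"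
  by (simp add: norm_mult power_mult_distrib)

lemma Xw_scale: "c \<in> Xw \<omega> \<Longrightarrow> (\<lambda>m. z * c m) \<in> Xw \<omega>"
  unfolding Xw_def using summable_mult[of "\<lambda>m. (cmod (c m))\<^sup>2 / \<omega> m" "(cmod z)\<^sup>2"]
  by (simp add: wterm_scale)

lemma wnorm_scale: "c \<in> Xw \<omega> \<Longrightarrow> wnorm \<omega> (\<lambda>m. z * c m) = cmod z * wnorm \<omega> c"
  by (simp only: Xw_def mem_Collect_eq wnorm_def wterm_scale suminf_mult real_sqrt_mult
      real_sqrt_abs abs_norm_cancel)

locale lower_bounded_weight =
  fixes \<omega> :: "nat \<Rightarrow> real" and \<delta> :: real
  assumes delta_pos: "0 < \<delta>" and delta_le_weight: "1 \<le> n \<Longrightarrow> \<delta> \<le> \<omega> n"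
begin

lemma weight_pos: "1 \<le> n \<Longrightarrow> 0 < \<omega> n"
  using delta_pos delta_le_weight by fastforce

lemma wterm_nonneg: "zero_below_3 c \<Longrightarrow> 0 \<le> (cmod (c m))\<^sup>2 / \<omega> m"
  using weight_pos[of m] by (cases "m = 0") (auto simp: zero_below_3_def)

lemma wnorm_nonneg: "c \<in> Xw \<omega> \<Longrightarrow> 0 \<le> wnorm \<omega> c"
  unfolding wnorm_def using wterm_nonneg zero_below_3_Xw by (auto simp: Xw_def intro: suminf_nonneg)

lemma Xw_finite_support:
  assumes "zero_below_3 c" and "finite {m. c m \<noteq> 0}"
  shows "c \<in> Xw \<omega>"
  using assms summable_finite[of "{m. c m \<noteq> 0}" "\<lambda>m. (cmod (c m))\<^sup>2 / \<omega> m"]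
  by (auto simp: Xw_def zero_below_3_def)

definition trunc_wnorm :: "(nat \<Rightarrow> complex) \<Rightarrow> nat \<Rightarrow> real" where
  "trunc_wnorm c M = L2_set (\<lambda>m. cmod (c m) / sqrt (\<omega> m)) {..<M}"

lemma trunc_wnorm_eq:
  assumes "zero_below_3 c"
  shows "trunc_wnorm c M = sqrt (\<Sum>m<M. (cmod (c m))\<^sup>2 / \<omega> m)"
  unfolding trunc_wnorm_def L2_set_def
proof (intro arg_cong[where f = sqrt] sum.cong refl)
  fix m
  show "(cmod (c m) / sqrt (\<omega> m))\<^sup>2 = (cmod (c m))\<^sup>2 / \<omega> m"
    using assms weight_pos[of m]
    by (cases "m = 0") (auto simp: zero_below_3_def power_divide)
qed

lemma trunc_wnorm_le_wnorm:
  assumes "c \<in> Xw \<omega>"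
  shows "trunc_wnorm c M \<le> wnorm \<omega> c"
proof -
  have "zero_below_3 c" and "summable (\<lambda>m. (cmod (c m))\<^sup>2 / \<omega> m)"
    using assms by (auto simp: Xw_def zero_below_3_def)
  then show ?thesis
    by (auto simp: trunc_wnorm_eq wnorm_def intro!: sum_le_suminf wterm_nonneg)
qed

lemma Xw_wnorm_le_of_trunc_wnorm_le:
  assumes "zero_below_3 c" and bound: "\<And>M. trunc_wnorm c M \<le> B"
  shows "c \<in> Xw \<omega>" and "wnorm \<omega> c \<le> B"
proof -
  have "0 \<le> B" using bound[of 0] by (simp add: trunc_wnorm_def)
  have partial: "(\<Sum>m<M. (cmod (c m))\<^sup>2 / \<omega> m) \<le> B\<^sup>2" for M
    using bound[of M] assms(1) by (simp add: trunc_wnorm_eq sqrt_le_D)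
  have summable: "summable (\<lambda>m. (cmod (c m))\<^sup>2 / \<omega> m)"
    using partial assms(1) by (intro summableI_nonneg_bounded wterm_nonneg)
  then show "c \<in> Xw \<omega>" using assms(1) by (simp add: Xw_def zero_below_3_def)
  have "(\<Sum>m. (cmod (c m))\<^sup>2 / \<omega> m) \<le> B\<^sup>2"
    using summable partial by (rule suminf_le_const)
  then show "wnorm \<omega> c \<le> B"
    using \<open>0 \<le> B\<close> by (simp add: wnorm_def real_le_lsqrt)
qed

lemma trunc_wnorm_add_le:
  assumes "zero_below_3 c" and "zero_below_3 d"
  shows "trunc_wnorm (\<lambda>m. c m + d m) M \<le> trunc_wnorm c M + trunc_wnorm d M"
proof -
  have "trunc_wnorm (\<lambda>m. c m + d m) M
      \<le> L2_set (\<lambda>m. cmod (c m) / sqrt (\<omega> m) + cmod (d m) / sqrt (\<omega> m)) {..<M}"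
    unfolding trunc_wnorm_def
  proof (rule L2_set_mono)
    fix m
    have "c m = 0 \<and> d m = 0 \<or> 0 < \<omega> m"
      using assms weight_pos[of m] by (cases "m = 0") (auto simp: zero_below_3_def)
    then show "0 \<le> cmod (c m + d m) / sqrt (\<omega> m)"
      and "cmod (c m + d m) / sqrt (\<omega> m) \<le> cmod (c m) / sqrt (\<omega> m) + cmod (d m) / sqrt (\<omega> m)"
      using norm_triangle_ineq[of "c m" "d m"]
      by (auto simp: add_divide_distrib[symmetric] divide_right_mono)
  qed
  also have "\<dots> \<le> trunc_wnorm c M + trunc_wnorm d M"
    unfolding trunc_wnorm_def by (rule L2_set_triangle_ineq)
  finally show ?thesis .
qed

lemma
  assumes "c \<in> Xw \<omega>" and "d \<in> Xw \<omega>"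
  shows Xw_add: "(\<lambda>m. c m + d m) \<in> Xw \<omega>"
    and wnorm_add_le: "wnorm \<omega> (\<lambda>m. c m + d m) \<le> wnorm \<omega> c + wnorm \<omega> d"
proof -
  have zero: "zero_below_3 c" "zero_below_3 d" using assms by (simp_all add: zero_below_3_Xw)
  have "trunc_wnorm (\<lambda>m. c m + d m) M \<le> wnorm \<omega> c + wnorm \<omega> d" for M
    using trunc_wnorm_add_le[OF zero, of M] trunc_wnorm_le_wnorm[OF assms(1), of M]
      trunc_wnorm_le_wnorm[OF assms(2), of M] by linarith
  moreover have "zero_below_3 (\<lambda>m. c m + d m)" using zero by (simp add: zero_below_3_def)
  ultimately show "(\<lambda>m. c m + d m) \<in> Xw \<omega>"
    and "wnorm \<omega> (\<lambda>m. c m + d m) \<le> wnorm \<omega> c + wnorm \<omega> d"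
    using Xw_wnorm_le_of_trunc_wnorm_le[of _ "wnorm \<omega> c + wnorm \<omega> d"] by blast+
qed

lemma Xw_diff: "c \<in> Xw \<omega> \<Longrightarrow> d \<in> Xw \<omega> \<Longrightarrow> c - d \<in> Xw \<omega>"
  using Xw_add[OF _ Xw_scale[where z = "-1"], of c d] by (simp add: fun_diff_def)

lemma wnorm_diff_triangle:
  assumes "c \<in> Xw \<omega>" and "d \<in> Xw \<omega>" and "e \<in> Xw \<omega>"
  shows "wnorm \<omega> (c - e) \<le> wnorm \<omega> (c - d) + wnorm \<omega> (d - e)"
  using wnorm_add_le[OF Xw_diff[OF assms(1,2)] Xw_diff[OF assms(2,3)]]
  by (simp add: fun_diff_def)

lemma trunc_wnorm_sum_le:
  assumes "finite J" and "\<And>j. j \<in> J \<Longrightarrow> zero_below_3 (x j)"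
  shows "trunc_wnorm (\<lambda>m. \<Sum>j\<in>J. x j m) M \<le> (\<Sum>j\<in>J. trunc_wnorm (x j) M)"
  using assms
proof (induction J rule: finite_induct)
  case empty
  then show ?case by (simp add: trunc_wnorm_def L2_set_0')
next
  case (insert i J)
  have "zero_below_3 (\<lambda>m. \<Sum>j\<in>J. x j m)"
    using insert.prems by (simp add: zero_below_3_def)
  then have "trunc_wnorm (\<lambda>m. \<Sum>j\<in>insert i J. x j m) M
      \<le> trunc_wnorm (x i) M + trunc_wnorm (\<lambda>m. \<Sum>j\<in>J. x j m) M"
    using insert by (simp add: trunc_wnorm_add_le)
  then show ?case using insert by simp
qed

lemma trunc_wnorm_cong: "(\<And>m. m < M \<Longrightarrow> c m = d m) \<Longrightarrow> trunc_wnorm c M = trunc_wnorm d M"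
  unfolding trunc_wnorm_def by (rule L2_set_cong) auto

lemma
  assumes "finite J" and "\<And>j. j \<in> J \<Longrightarrow> x j \<in> Xw \<omega>"
  shows Xw_sum: "(\<lambda>m. \<Sum>j\<in>J. x j m) \<in> Xw \<omega>"
    and wnorm_sum_le: "wnorm \<omega> (\<lambda>m. \<Sum>j\<in>J. x j m) \<le> (\<Sum>j\<in>J. wnorm \<omega> (x j))"
proof -
  have zero: "zero_below_3 (x j)" if "j \<in> J" for j using assms(2)[OF that] by (rule zero_below_3_Xw)
  have "trunc_wnorm (\<lambda>m. \<Sum>j\<in>J. x j m) M \<le> (\<Sum>j\<in>J. wnorm \<omega> (x j))" for M
  proof -
    have "trunc_wnorm (\<lambda>m. \<Sum>j\<in>J. x j m) M \<le> (\<Sum>j\<in>J. trunc_wnorm (x j) M)"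
      using assms(1) zero by (rule trunc_wnorm_sum_le)
    also have "\<dots> \<le> (\<Sum>j\<in>J. wnorm \<omega> (x j))"
      using assms(2) by (intro sum_mono trunc_wnorm_le_wnorm)
    finally show ?thesis .
  qed
  moreover have "zero_below_3 (\<lambda>m. \<Sum>j\<in>J. x j m)" using zero by (simp add: zero_below_3_def)
  ultimately show "(\<lambda>m. \<Sum>j\<in>J. x j m) \<in> Xw \<omega>"
    and "wnorm \<omega> (\<lambda>m. \<Sum>j\<in>J. x j m) \<le> (\<Sum>j\<in>J. wnorm \<omega> (x j))"
    using Xw_wnorm_le_of_trunc_wnorm_le[of _ "\<Sum>j\<in>J. wnorm \<omega> (x j)"] by blast+
qed

lemma wnorm_series_le:
  fixes x :: "nat \<Rightarrow> nat \<Rightarrow> complex"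
  assumes "zero_below_3 c" and "\<And>j. x j \<in> Xw \<omega>"
    and partial_sums: "\<And>M. \<exists>K. \<forall>m<M. c m = (\<Sum>j<K. x j m)"
    and bound: "\<And>K. (\<Sum>j<K. wnorm \<omega> (x j)) \<le> B"
  shows "c \<in> Xw \<omega>" and "wnorm \<omega> c \<le> B"
proof -
  have "trunc_wnorm c M \<le> B" for M
  proof -
    obtain K where K: "\<forall>m<M. c m = (\<Sum>j<K. x j m)" using partial_sums by blast
    have "trunc_wnorm c M = trunc_wnorm (\<lambda>m. \<Sum>j<K. x j m) M"
      using K by (intro trunc_wnorm_cong) simp
    also have "\<dots> \<le> (\<Sum>j<K. trunc_wnorm (x j) M)"
      by (rule trunc_wnorm_sum_le) (auto intro: zero_below_3_Xw assms(2))
    also have "\<dots> \<le> (\<Sum>j<K. wnorm \<omega> (x j))"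
      using assms(2) by (intro sum_mono trunc_wnorm_le_wnorm)
    finally show ?thesis using bound[of K] by linarith
  qed
  then show "c \<in> Xw \<omega>" and "wnorm \<omega> c \<le> B"
    using Xw_wnorm_le_of_trunc_wnorm_le[OF assms(1)] by auto
qed

end

section \<open>A countable dense set of polynomials annihilated by powers of T\<close>

definition Gauss_rat :: "complex set" where
  "Gauss_rat = {z. Re z \<in> \<rat> \<and> Im z \<in> \<rat>}"

lemma Gauss_rat_mult: "z \<in> Gauss_rat \<Longrightarrow> w \<in> Gauss_rat \<Longrightarrow> z * w \<in> Gauss_rat"
  by (simp add: Gauss_rat_def)

lemma Gauss_rat_sum: "(\<And>i. i \<in> I \<Longrightarrow> f i \<in> Gauss_rat) \<Longrightarrow> (\<Sum>i\<in>I. f i) \<in> Gauss_rat"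
  by (auto simp: Gauss_rat_def Re_sum Im_sum intro: Rats_sum)

lemma inverse_of_nat_Gauss_rat: "1 / of_nat n \<in> Gauss_rat"
  by (simp add: Gauss_rat_def Re_divide Im_divide)

lemma countable_Gauss_rat: "countable Gauss_rat"
proof -
  have "Gauss_rat = (\<lambda>(x, y). Complex x y) ` (\<rat> \<times> \<rat>)"
    by (auto simp: Gauss_rat_def image_iff) (metis complex_surj)
  then show ?thesis by (metis countable_SIGMA countable_image countable_rat)
qed

lemma Gauss_rat_approx:
  assumes "0 < \<epsilon>"
  shows "\<exists>q\<in>Gauss_rat. cmod (q - z) < \<epsilon>"
proof -
  obtain x where x: "x \<in> \<rat>" "Re z < x" "x < Re z + \<epsilon> / 2"
    using Rats_dense_in_real[of "Re z" "Re z + \<epsilon> / 2"] assms by auto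
  obtain y where y: "y \<in> \<rat>" "Im z < y" "y < Im z + \<epsilon> / 2"
    using Rats_dense_in_real[of "Im z" "Im z + \<epsilon> / 2"] assms by auto
  have "cmod (Complex x y - z) \<le> \<bar>x - Re z\<bar> + \<bar>y - Im z\<bar>"
    using cmod_le[of "Complex x y - z"] by simp
  then show ?thesis using x y by (intro bexI[of _ "Complex x y"]) (auto simp: Gauss_rat_def)
qed

text \<open>The dense set of the Hypercyclicity Criterion, taken countable so that it can be
  enumerated; on it the powers of T are eventually zero.\<close>
definition null_polys :: "(nat \<Rightarrow> complex) set" where
  "null_polys = {c. zero_below_3 c \<and> finite {m. c m \<noteq> 0} \<and> range c \<subseteq> Gauss_rat
                    \<and> (\<exists>N. (Top ^^ N) c = (\<lambda>_. 0))}"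

lemma null_polys_sum:
  assumes "finite I" and "\<And>i. i \<in> I \<Longrightarrow> x i \<in> null_polys"
  shows "(\<lambda>m. \<Sum>i\<in>I. x i m) \<in> null_polys"
proof -
  have "\<forall>i\<in>I. \<exists>N. (Top ^^ N) (x i) = (\<lambda>_. 0)"
    using assms(2) by (simp add: null_polys_def)
  from bchoice[OF this] obtain N where N: "\<And>i. i \<in> I \<Longrightarrow> (Top ^^ N i) (x i) = (\<lambda>_. 0)"
    by blast
  have "N i \<le> (\<Sum>i\<in>I. N i)" if "i \<in> I" for i
    using assms(1) that by (simp add: member_le_sum)
  then have "(Top ^^ (\<Sum>i\<in>I. N i)) (x i) = (\<lambda>_. 0)" if "i \<in> I" for i
    using funpow_Top_eq_0_mono[OF N] that by blast
  then have "(Top ^^ (\<Sum>i\<in>I. N i)) (\<lambda>m. \<Sum>i\<in>I. x i m) = (\<lambda>_. 0)"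
    by (simp add: funpow_Top_sum)
  moreover have "finite {m. (\<Sum>i\<in>I. x i m) \<noteq> 0}"
  proof (rule finite_subset)
    show "{m. (\<Sum>i\<in>I. x i m) \<noteq> 0} \<subseteq> (\<Union>i\<in>I. {m. x i m \<noteq> 0})"
    proof
      fix m assume "m \<in> {m. (\<Sum>i\<in>I. x i m) \<noteq> 0}"
      then show "m \<in> (\<Union>i\<in>I. {m. x i m \<noteq> 0})" using sum.neutral[of I "\<lambda>i. x i m"] by blast
    qed
    show "finite (\<Union>i\<in>I. {m. x i m \<noteq> 0})"
      using assms by (simp add: null_polys_def)
  qed
  moreover have "(\<Sum>i\<in>I. x i m) \<in> Gauss_rat" for m
  proof (rule Gauss_rat_sum)
    fix i assume "i \<in> I"
    then show "x i m \<in> Gauss_rat" using assms(2) by (auto simp: null_polys_def)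
  qed
  ultimately show ?thesis
    using assms(2) by (auto simp: null_polys_def zero_below_3_def)
qed

lemma null_polys_scale:
  assumes "z \<in> Gauss_rat" and "c \<in> null_polys"
  shows "(\<lambda>m. z * c m) \<in> null_polys"
proof -
  obtain N where "(Top ^^ N) c = (\<lambda>_. 0)" using assms(2) by (auto simp: null_polys_def)
  then have "(Top ^^ N) (\<lambda>m. z * c m) = (\<lambda>_. 0)" by (simp add: funpow_Top_scale)
  moreover have "finite {m. z * c m \<noteq> 0}"
    using assms(2) by (auto simp: null_polys_def elim: rev_finite_subset)
  moreover have "z * c m \<in> Gauss_rat" for m
    using assms by (auto simp: null_polys_def intro: Gauss_rat_mult)
  ultimately show ?thesis
    using assms(2) by (auto simp: null_polys_def zero_below_3_def)
qed

lemma ebasis_diff_null_polys: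
  "(\<lambda>m. ebasis a m - ebasis (2 ^ K * (collatz ^^ K) a) m) \<in> null_polys"
proof -
  let ?b = "2 ^ K * (collatz ^^ K) a"
  have "finite {m. ebasis a m - ebasis ?b m \<noteq> 0}"
    by (rule finite_subset[of _ "{a, ?b}"]) (auto simp: ebasis_def)
  moreover have "ebasis a m - ebasis ?b m \<in> Gauss_rat" for m
    by (simp add: Gauss_rat_def ebasis_def)
  ultimately show ?thesis
    using funpow_Top_ebasis_diff[of K a] by (auto simp: null_polys_def zero_below_3_def ebasis_def)
qed

lemma countable_null_polys: "countable null_polys"
proof -
  let ?seq = "\<lambda>xs m. if m < length xs then xs ! m else 0 :: complex"
  have "c \<in> ?seq ` lists Gauss_rat" if c: "c \<in> null_polys" for c
  proof -
    have "finite {m. c m \<noteq> 0}" using c by (simp add: null_polys_def)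
    then obtain B where "{m. c m \<noteq> 0} \<subseteq> {..<B}" using finite_nat_bounded by blast
    then have "c = ?seq (map c [0..<B])" by force
    moreover have "map c [0..<B] \<in> lists Gauss_rat"
      using c by (auto simp: null_polys_def image_subset_iff)
    ultimately show ?thesis by (rule image_eqI)
  qed
  then have "null_polys \<subseteq> ?seq ` lists Gauss_rat" by blast
  then show ?thesis
    by (rule countable_subset) (simp add: countable_Gauss_rat)
qed

lemma zero_null_polys: "(\<lambda>_. 0) \<in> null_polys"
  by (simp add: null_polys_def zero_below_3_def Gauss_rat_def exI[of _ 0])

text \<open>Composing with \<^const>\<open>prod_decode\<close> makes every element recur at arbitrarily large
  indices.\<close>
definition null_enum :: "nat \<Rightarrow> nat \<Rightarrow> complex" where
  "null_enum k = from_nat_into null_polys (fst (prod_decode k))"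

lemma null_enum_null_polys: "null_enum k \<in> null_polys"
  using zero_null_polys by (auto simp: null_enum_def intro: from_nat_into)

lemma null_enum_frequently:
  assumes "y \<in> null_polys"
  shows "\<exists>k\<ge>K. null_enum k = y"
proof -
  obtain i where "from_nat_into null_polys i = y"
    using from_nat_into_surj[OF countable_null_polys assms] by blast
  then have "null_enum (prod_encode (i, K)) = y" by (simp add: null_enum_def)
  then show ?thesis using le_prod_encode_2 by blast
qed

context lower_bounded_weight
begin

lemma null_polys_Xw: "c \<in> null_polys \<Longrightarrow> c \<in> Xw \<omega>"
  by (auto simp: null_polys_def intro: Xw_finite_support)

lemma ebasis_Xw: "ebasis a \<in> Xw \<omega>"
  by (rule Xw_finite_support) (auto simp: zero_below_3_def ebasis_def intro: finite_subset[of _ "{a}"])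

lemma wnorm_ebasis_le: "wnorm \<omega> (ebasis a) \<le> 1 / sqrt \<delta>"
proof -
  have "wnorm \<omega> (ebasis a) = sqrt ((cmod (ebasis a a))\<^sup>2 / \<omega> a)"
    by (subst wnorm_finite_support[of "{a}"]) (auto simp: ebasis_def)
  also have "\<dots> \<le> sqrt (1 / \<delta>)"
    using delta_pos delta_le_weight[of a] by (auto simp: ebasis_def frac_le)
  finally show ?thesis by (simp add: real_sqrt_divide)
qed

lemma sum_ebasis:
  assumes "finite F" and "F \<subseteq> {3..}"
  shows "(\<Sum>b\<in>F. q b * ebasis b m) = (if m \<in> F then q m else 0)"
proof -
  have "(\<Sum>b\<in>F. q b * ebasis b m) = (\<Sum>b\<in>F. if m = b then q b else 0)"
    using assms(2) by (intro sum.cong) (auto simp: ebasis_def)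
  then show ?thesis using assms(1) by simp
qed

text \<open>Averaging \<open>e\<^sub>a - e\<^sub>b\<close> over P lifts \<open>b = 2\<^sup>K T\<^sup>K(a)\<close> leaves an error of squared
  norm at most \<open>1/(P\<delta>)\<close>.\<close>
lemma ebasis_approx:
  assumes "3 \<le> a" and "0 < \<epsilon>"
  shows "\<exists>y\<in>null_polys. wnorm \<omega> (ebasis a - y) < \<epsilon>"
proof -
  obtain P :: nat where P: "1 / (\<delta> * \<epsilon>\<^sup>2) < P"
    using reals_Archimedean2 by blast
  moreover have "0 < 1 / (\<delta> * \<epsilon>\<^sup>2)" using delta_pos assms(2) by simp
  ultimately have "0 < P" by linarith
  let ?lifts = "{2 ^ K * (collatz ^^ K) a | K. True} \<inter> {3..}"
  have "infinite ?lifts"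
    unfolding infinite_nat_iff_unbounded_le
  proof
    fix n
    have "n + 3 < 2 ^ (n + 3)" by (rule less_exp)
    also have "\<dots> \<le> 2 ^ (n + 3) * (collatz ^^ (n + 3)) a"
      using funpow_collatz_pos[of a "n + 3"] assms(1) by simp
    finally show "\<exists>m\<ge>n. m \<in> ?lifts"
      by (intro exI[of _ "2 ^ (n + 3) * (collatz ^^ (n + 3)) a"]) auto
  qed
  then obtain F where F: "F \<subseteq> ?lifts" "finite F" "card F = P"
    using infinite_arbitrarily_large by blast
  define y where "y m = (\<Sum>b\<in>F. 1 / of_nat P * (ebasis a m - ebasis b m))" for m
  have "y \<in> null_polys"
    unfolding y_def using F(1)
    by (intro null_polys_sum null_polys_scale F(2) inverse_of_nat_Gauss_rat)
      (auto intro: ebasis_diff_null_polys)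
  have "y m = 1 / of_nat P * (of_nat (card F) * ebasis a m - (\<Sum>b\<in>F. ebasis b m))" for m
    by (simp add: y_def sum_divide_distrib[symmetric] sum_subtractf)
  then have "(ebasis a - y) m = (\<Sum>b\<in>F. ebasis b m) / of_nat P" for m
    using F(3) \<open>0 < P\<close> by (simp add: field_simps)
  then have "(ebasis a - y) m = (if m \<in> F then 1 / of_nat P else 0)" for m
    using F sum_ebasis[of F "\<lambda>_. 1" m] by simp
  then have "wnorm \<omega> (ebasis a - y) = sqrt (\<Sum>b\<in>F. (1 / real P)\<^sup>2 / \<omega> b)"
    using F(2) by (subst wnorm_finite_support[of F]) (auto simp: norm_divide)
  also have "\<dots> \<le> sqrt (\<Sum>b\<in>F. (1 / real P)\<^sup>2 / \<delta>)"
  proof (intro real_sqrt_le_mono sum_mono divide_left_mono)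
    fix b assume "b \<in> F"
    then have "1 \<le> b" using F(1) by auto
    then show "\<delta> \<le> \<omega> b" and "0 < \<omega> b * \<delta>"
      using delta_le_weight weight_pos delta_pos by simp_all
  qed simp
  also have "\<dots> = sqrt (1 / (P * \<delta>))"
    using F(3) \<open>0 < P\<close> by (simp add: power2_eq_square)
  also have "\<dots> < \<epsilon>"
    using P \<open>0 < P\<close> delta_pos assms(2)
    by (intro real_less_lsqrt) (auto simp: field_simps)
  finally show ?thesis using \<open>y \<in> null_polys\<close> by blast
qed

lemma sum_ebasis_Xw: "finite A \<Longrightarrow> (\<lambda>m. \<Sum>a\<in>A. q a * ebasis a m) \<in> Xw \<omega>"
  by (intro Xw_sum Xw_scale ebasis_Xw)

lemma wnorm_sum_ebasis_le:
  assumes "finite A"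
  shows "wnorm \<omega> (\<lambda>m. \<Sum>a\<in>A. q a * ebasis a m) \<le> (\<Sum>a\<in>A. cmod (q a)) / sqrt \<delta>"
proof -
  have "wnorm \<omega> (\<lambda>m. \<Sum>a\<in>A. q a * ebasis a m) \<le> (\<Sum>a\<in>A. cmod (q a) * wnorm \<omega> (ebasis a))"
    using wnorm_sum_le[of A "\<lambda>a m. q a * ebasis a m"] assms by (simp add: Xw_scale ebasis_Xw wnorm_scale)
  also have "\<dots> \<le> (\<Sum>a\<in>A. cmod (q a) * (1 / sqrt \<delta>))"
    by (intro sum_mono mult_left_mono wnorm_ebasis_le) simp
  finally show ?thesis by (simp add: sum_divide_distrib)
qed

lemma truncation_eq_sum_ebasis:
  assumes "zero_below_3 g"
  shows "(\<lambda>m. if m < M then g m else 0) = (\<lambda>m. \<Sum>a\<in>{3..<M}. g a * ebasis a m)"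
proof
  fix m
  have "(\<Sum>a\<in>{3..<M}. g a * ebasis a m) = (if m \<in> {3..<M} then g m else 0)"
    by (rule sum_ebasis) auto
  then show "(if m < M then g m else 0) = (\<Sum>a\<in>{3..<M}. g a * ebasis a m)"
    using assms by (auto simp: zero_below_3_def)
qed

lemma Gauss_poly_approx:
  assumes "g \<in> Xw \<omega>" and "0 < \<epsilon>"
  shows "\<exists>A q. finite A \<and> A \<subseteq> {3..} \<and> (\<forall>a. q a \<in> Gauss_rat)
    \<and> wnorm \<omega> (g - (\<lambda>m. \<Sum>a\<in>A. q a * ebasis a m)) < \<epsilon>"
proof -
  obtain M where M: "wnorm \<omega> (g - (\<lambda>m. if m < M then g m else 0)) < \<epsilon> / 2"
    using wnorm_tail_small[OF assms(1), of "\<epsilon> / 2"] assms(2) by auto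
  let ?A = "{3..<M}"
  let ?g = "\<lambda>m. \<Sum>a\<in>?A. g a * ebasis a m"
  define \<eta> where "\<eta> = \<epsilon> * sqrt \<delta> / (2 * (real M + 1))"
  have "0 < \<eta>" using assms(2) delta_pos by (simp add: \<eta>_def)
  then have "\<forall>a. \<exists>z. z \<in> Gauss_rat \<and> cmod (g a - z) < \<eta>"
    using Gauss_rat_approx by (metis norm_minus_commute)
  from choice[OF this] obtain q where q: "\<And>a. q a \<in> Gauss_rat" "\<And>a. cmod (g a - q a) < \<eta>"
    by blast
  have "?g - (\<lambda>m. \<Sum>a\<in>?A. q a * ebasis a m) = (\<lambda>m. \<Sum>a\<in>?A. (g a - q a) * ebasis a m)"
    by (simp add: fun_diff_def sum_subtractf left_diff_distrib)
  then have "wnorm \<omega> (?g - (\<lambda>m. \<Sum>a\<in>?A. q a * ebasis a m))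
      \<le> (\<Sum>a\<in>?A. cmod (g a - q a)) / sqrt \<delta>"
    using wnorm_sum_ebasis_le[of ?A "\<lambda>a. g a - q a"] by simp
  also have "\<dots> \<le> (\<Sum>a\<in>?A. \<eta>) / sqrt \<delta>"
    using q(2) delta_pos by (intro divide_right_mono sum_mono less_imp_le) auto
  also have "\<dots> \<le> real M * \<eta> / sqrt \<delta>"
    using \<open>0 < \<eta>\<close> delta_pos by (intro divide_right_mono) auto
  also have "\<dots> = \<epsilon> / 2 * (real M / (real M + 1))"
    using delta_pos by (simp add: \<eta>_def)
  also have "\<dots> < \<epsilon> / 2"
    using assms(2) mult_strict_left_mono[of "real M / (real M + 1)" 1 "\<epsilon> / 2"] by simp
  finally have "wnorm \<omega> (?g - (\<lambda>m. \<Sum>a\<in>?A. q a * ebasis a m)) < \<epsilon> / 2" .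
  moreover have "wnorm \<omega> (g - (\<lambda>m. \<Sum>a\<in>?A. q a * ebasis a m))
      \<le> wnorm \<omega> (g - ?g) + wnorm \<omega> (?g - (\<lambda>m. \<Sum>a\<in>?A. q a * ebasis a m))"
    using assms(1) sum_ebasis_Xw[of ?A g] sum_ebasis_Xw[of ?A q] by (intro wnorm_diff_triangle) auto
  moreover have "wnorm \<omega> (g - ?g) < \<epsilon> / 2"
    using M truncation_eq_sum_ebasis[OF zero_below_3_Xw[OF assms(1)]] by simp
  ultimately have "wnorm \<omega> (g - (\<lambda>m. \<Sum>a\<in>?A. q a * ebasis a m)) < \<epsilon>"
    by linarith
  then show ?thesis using q(1) by (intro exI[of _ ?A] exI[of _ q]) auto
qed

lemma null_polys_approx_Gauss_poly:
  assumes "finite A" and "A \<subseteq> {3..}" and "\<And>a. q a \<in> Gauss_rat" and "0 < \<epsilon>"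
  shows "\<exists>y\<in>null_polys. wnorm \<omega> ((\<lambda>m. \<Sum>a\<in>A. q a * ebasis a m) - y) < \<epsilon>"
proof -
  define S where "S = (\<Sum>a\<in>A. cmod (q a))"
  have "0 \<le> S" by (simp add: S_def sum_nonneg)
  then have "0 < \<epsilon> / (S + 1)" using assms(4) by simp
  then have "\<forall>a\<in>A. \<exists>y. y \<in> null_polys \<and> wnorm \<omega> (ebasis a - y) < \<epsilon> / (S + 1)"
    using assms(2) ebasis_approx by blast
  from bchoice[OF this] obtain y where y: "\<And>a. a \<in> A \<Longrightarrow> y a \<in> null_polys"
    and close: "\<And>a. a \<in> A \<Longrightarrow> wnorm \<omega> (ebasis a - y a) < \<epsilon> / (S + 1)"
    by blast
  define d where "d a = ebasis a - y a" for a
  have d_Xw: "d a \<in> Xw \<omega>" if "a \<in> A" for a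
    using y[OF that] unfolding d_def by (intro Xw_diff ebasis_Xw null_polys_Xw)
  have "(\<lambda>m. \<Sum>a\<in>A. q a * ebasis a m) - (\<lambda>m. \<Sum>a\<in>A. q a * y a m)
      = (\<lambda>m. \<Sum>a\<in>A. q a * d a m)"
    by (simp add: d_def fun_diff_def sum_subtractf right_diff_distrib)
  then have "wnorm \<omega> ((\<lambda>m. \<Sum>a\<in>A. q a * ebasis a m) - (\<lambda>m. \<Sum>a\<in>A. q a * y a m))
      \<le> (\<Sum>a\<in>A. cmod (q a) * wnorm \<omega> (d a))"
    using wnorm_sum_le[of A "\<lambda>a m. q a * d a m"] assms(1) d_Xw by (simp add: Xw_scale wnorm_scale)
  also have "\<dots> \<le> (\<Sum>a\<in>A. cmod (q a) * (\<epsilon> / (S + 1)))"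
    using close by (intro sum_mono mult_left_mono) (auto simp: d_def less_imp_le)
  also have "\<dots> = S * (\<epsilon> / (S + 1))"
    by (simp only: S_def sum_distrib_right)
  also have "\<dots> < \<epsilon>"
    using assms(4) \<open>0 \<le> S\<close> by (simp add: field_simps)
  finally have "wnorm \<omega> ((\<lambda>m. \<Sum>a\<in>A. q a * ebasis a m) - (\<lambda>m. \<Sum>a\<in>A. q a * y a m)) < \<epsilon>" .
  moreover have "(\<lambda>m. \<Sum>a\<in>A. q a * y a m) \<in> null_polys"
    using assms(1,3) y by (intro null_polys_sum null_polys_scale)
  ultimately show ?thesis by blast
qed

lemma null_polys_dense:
  assumes "g \<in> Xw \<omega>" and "0 < \<epsilon>"
  shows "\<exists>y\<in>null_polys. wnorm \<omega> (g - y) < \<epsilon>"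
proof -
  obtain A q where A: "finite A" "A \<subseteq> {3..}" and q: "\<And>a. q a \<in> Gauss_rat"
    and close: "wnorm \<omega> (g - (\<lambda>m. \<Sum>a\<in>A. q a * ebasis a m)) < \<epsilon> / 2"
    using Gauss_poly_approx[OF assms(1), of "\<epsilon> / 2"] assms(2) by auto
  obtain y where y: "y \<in> null_polys"
    and "wnorm \<omega> ((\<lambda>m. \<Sum>a\<in>A. q a * ebasis a m) - y) < \<epsilon> / 2"
    using null_polys_approx_Gauss_poly[of A q "\<epsilon> / 2"] A q assms(2) by auto
  moreover have "wnorm \<omega> (g - y) \<le> wnorm \<omega> (g - (\<lambda>m. \<Sum>a\<in>A. q a * ebasis a m))
      + wnorm \<omega> ((\<lambda>m. \<Sum>a\<in>A. q a * ebasis a m) - y)"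
    using assms(1) sum_ebasis_Xw[OF A(1)] null_polys_Xw[OF y] by (rule wnorm_diff_triangle)
  ultimately show ?thesis using close by force
qed

lemma
  assumes "zero_below_3 c" and "finite {n. c n \<noteq> 0}"
  shows Xw_funpow_Ssq: "(Ssq ^^ d) c \<in> Xw \<omega>"
    and wnorm_funpow_Ssq:
      "wnorm \<omega> ((Ssq ^^ d) c) = sqrt (\<Sum>n | c n \<noteq> 0. (cmod (c n))\<^sup>2 / \<omega> (2 ^ d * n))"
proof -
  let ?S = "{n. c n \<noteq> 0}"
  have outside: "(Ssq ^^ d) c m = 0" if "m \<notin> (\<lambda>n. 2 ^ d * n) ` ?S" for m
    using that by (auto simp: funpow_Ssq dvd_def)
  have "{m. (Ssq ^^ d) c m \<noteq> 0} \<subseteq> (\<lambda>n. 2 ^ d * n) ` ?S" using outside by blast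
  then show "(Ssq ^^ d) c \<in> Xw \<omega>"
    using assms by (intro Xw_finite_support zero_below_3_funpow_Ssq) (auto intro: finite_subset)
  have "inj_on (\<lambda>n. 2 ^ d * n) ?S" by (auto intro: inj_onI)
  then show "wnorm \<omega> ((Ssq ^^ d) c) = sqrt (\<Sum>n\<in>?S. (cmod (c n))\<^sup>2 / \<omega> (2 ^ d * n))"
    using assms(2) outside by (simp add: wnorm_finite_support[of "(\<lambda>n. 2 ^ d * n) ` ?S"]
      sum.reindex funpow_Ssq)
qed

end

section \<open>The hypercyclic vector\<close>

definition kill_time :: "nat \<Rightarrow> nat" where
  "kill_time k = (LEAST N. (Top ^^ N) (null_enum k) = (\<lambda>_. 0))"

lemma funpow_Top_kill_time: "(Top ^^ kill_time k) (null_enum k) = (\<lambda>_. 0)"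
proof -
  have "\<exists>N. (Top ^^ N) (null_enum k) = (\<lambda>_. 0)"
    using null_enum_null_polys[of k] by (simp add: null_polys_def)
  then show ?thesis unfolding kill_time_def by (rule LeastI_ex)
qed

lemma zero_below_3_null_enum: "zero_below_3 (null_enum k)"
  and finite_support_null_enum: "finite {m. null_enum k m \<noteq> 0}"
  using null_enum_null_polys[of k] by (simp_all add: null_polys_def)

lemma sum_half_powers_le:
  assumes "finite J" and "J \<subseteq> {m..}"
  shows "(\<Sum>j\<in>J. (1/2::real) ^ j) \<le> 2 * (1/2) ^ m"
proof -
  obtain n where "J \<subseteq> {..<n}" using assms(1) finite_nat_bounded by blast
  then have "(\<Sum>j\<in>J. (1/2::real) ^ j) \<le> (\<Sum>j=m..n. (1/2) ^ j)"
    using assms(2) by (intro sum_mono2) (auto simp: subset_iff less_imp_le)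
  also have "\<dots> \<le> 2 * (1/2) ^ m"
  proof (cases "m \<le> n")
    case True
    then have "(1 - 1/2) * (\<Sum>j=m..n. (1/2::real) ^ j) = (1/2) ^ m - (1/2) ^ Suc n"
      by (rule sum_gp_multiplied)
    then show ?thesis by simp
  qed simp
  finally show ?thesis .
qed

primrec gap_seq :: "(nat \<Rightarrow> nat) \<Rightarrow> (nat \<Rightarrow> nat) \<Rightarrow> nat \<Rightarrow> nat" where
  "gap_seq N D 0 = D 0"
| "gap_seq N D (Suc k) = gap_seq N D k + N k + D (Suc k) + 1"

lemma gap_seq_ge: "D k \<le> gap_seq N D k"
  by (cases k) simp_all

lemma gap_seq_ge_index: "k \<le> gap_seq N D k"
  by (induction k) simp_all

lemma gap_seq_gap: "j < k \<Longrightarrow> gap_seq N D j + N j + D k \<le> gap_seq N D k"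
proof (induction k)
  case (Suc k)
  then show ?case by (cases "j = k") (auto intro: order_trans[OF _ le_add1])
qed simp

locale dyadic_growth_weight = lower_bounded_weight +
  assumes weight_tendsto: "3 \<le> k \<Longrightarrow> filterlim (\<lambda>n. \<omega> (k * 2 ^ n)) at_top sequentially"
begin

lemma wnorm_funpow_Ssq_tendsto_0:
  assumes "zero_below_3 c" and "finite {n. c n \<noteq> 0}"
  shows "(\<lambda>d. wnorm \<omega> ((Ssq ^^ d) c)) \<longlonglongrightarrow> 0"
proof -
  have "(\<lambda>d. (cmod (c n))\<^sup>2 / \<omega> (2 ^ d * n)) \<longlonglongrightarrow> 0" if "c n \<noteq> 0" for n
  proof -
    have "3 \<le> n" using assms(1) that by (auto simp: zero_below_3_def not_le[symmetric])
    then have "(\<lambda>d. inverse (\<omega> (2 ^ d * n))) \<longlonglongrightarrow> 0"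
      using tendsto_inverse_0_at_top[OF weight_tendsto] by (simp add: mult.commute)
    then show ?thesis using tendsto_mult_left[of _ 0 sequentially "(cmod (c n))\<^sup>2"]
      by (simp add: divide_inverse)
  qed
  then have "(\<lambda>d. \<Sum>n | c n \<noteq> 0. (cmod (c n))\<^sup>2 / \<omega> (2 ^ d * n)) \<longlonglongrightarrow> 0"
    by (intro tendsto_null_sum) auto
  then show ?thesis
    using tendsto_real_sqrt by (fastforce simp: wnorm_funpow_Ssq[OF assms])
qed

definition decay_time :: "nat \<Rightarrow> nat" where
  "decay_time k = (LEAST D. \<forall>d\<ge>D. wnorm \<omega> ((Ssq ^^ d) (null_enum k)) \<le> (1/2) ^ k)"

lemma wnorm_funpow_Ssq_decay_time:
  assumes "decay_time k \<le> d"
  shows "wnorm \<omega> ((Ssq ^^ d) (null_enum k)) \<le> (1/2) ^ k"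
proof -
  have "\<forall>\<^sub>F d in sequentially. wnorm \<omega> ((Ssq ^^ d) (null_enum k)) < (1/2) ^ k"
    using zero_below_3_null_enum finite_support_null_enum
    by (intro order_tendstoD(2)[OF wnorm_funpow_Ssq_tendsto_0]) simp_all
  then have "\<exists>D. \<forall>d\<ge>D. wnorm \<omega> ((Ssq ^^ d) (null_enum k)) \<le> (1/2) ^ k"
    unfolding eventually_sequentially by (meson less_imp_le)
  then have "\<forall>d\<ge>decay_time k. wnorm \<omega> ((Ssq ^^ d) (null_enum k)) \<le> (1/2) ^ k"
    unfolding decay_time_def by (rule LeastI_ex)
  then show ?thesis using assms by blast
qed

definition hc_time :: "nat \<Rightarrow> nat" where
  "hc_time = gap_seq kill_time decay_time"

definition hc_piece :: "nat \<Rightarrow> nat \<Rightarrow> complex" where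
  "hc_piece j = (Ssq ^^ hc_time j) (null_enum j)"

text \<open>The vector below is \<open>f = \<Sum>\<^sub>j S\<^sup>n\<^sup>\<^sub>j y\<^sub>j\<close> with \<open>n\<^sub>j = hc_time j\<close>, \<open>y\<^sub>j = null_enum j\<close>. The
  gaps between the \<open>n\<^sub>j\<close> make \<open>T\<^sup>n\<^sup>\<^sub>k\<close> annihilate the terms \<open>j < k\<close> and shrink the terms
  \<open>j > k\<close>; the \<open>j\<close>-th term vanishes in degrees \<open>\<le> j\<close>, so each coefficient of \<open>f\<close> is a
  finite sum.\<close>
definition hc_vector :: "nat \<Rightarrow> complex" where
  "hc_vector m = (\<Sum>j<m. hc_piece j m)"

lemma hc_piece_Xw: "hc_piece j \<in> Xw \<omega>"
  unfolding hc_piece_def using zero_below_3_null_enum finite_support_null_enum by (rule Xw_funpow_Ssq)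

lemma wnorm_hc_piece_le: "wnorm \<omega> (hc_piece j) \<le> (1/2) ^ j"
  unfolding hc_piece_def hc_time_def by (intro wnorm_funpow_Ssq_decay_time gap_seq_ge)

lemma hc_piece_eq_0:
  assumes "m \<le> j"
  shows "hc_piece j m = 0"
proof -
  have "j < 2 ^ hc_time j" using gap_seq_ge_index[of j] less_exp by (metis hc_time_def le_less_trans)
  then have "m < 3 * 2 ^ hc_time j" using assms by linarith
  then show ?thesis unfolding hc_piece_def by (intro funpow_Ssq_eq_0 zero_below_3_null_enum)
qed

lemma hc_vector_eq_sum: "m \<le> K \<Longrightarrow> hc_vector m = (\<Sum>j<K. hc_piece j m)"
  unfolding hc_vector_def by (rule sum.mono_neutral_left) (auto simp: hc_piece_eq_0)

lemma hc_vector_Xw: "hc_vector \<in> Xw \<omega>"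
proof (rule wnorm_series_le[where x = hc_piece and B = 2])
  show "zero_below_3 hc_vector"
    using hc_piece_Xw by (auto simp: hc_vector_def zero_below_3_def Xw_def)
  show "\<exists>K. \<forall>m<M. hc_vector m = (\<Sum>j<K. hc_piece j m)" for M
    by (intro exI[of _ M]) (auto intro: hc_vector_eq_sum)
  show "(\<Sum>j<K. wnorm \<omega> (hc_piece j)) \<le> 2" for K
  proof -
    have "(\<Sum>j<K. wnorm \<omega> (hc_piece j)) \<le> (\<Sum>j<K. (1/2) ^ j)"
      by (intro sum_mono wnorm_hc_piece_le)
    then show ?thesis using sum_half_powers_le[of "{..<K}" 0] by simp
  qed
qed (rule hc_piece_Xw)

lemma funpow_Top_hc_piece:
  "(Top ^^ hc_time k) (hc_piece j)
    = (if j < k then (\<lambda>_. 0) else (Ssq ^^ (hc_time j - hc_time k)) (null_enum j))"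
proof (cases "j < k")
  case True
  then have "hc_time j + kill_time j \<le> hc_time k"
    using gap_seq_gap[OF True, of kill_time decay_time] by (simp add: hc_time_def)
  then have "(Top ^^ hc_time k) (hc_piece j) = (Top ^^ (hc_time k - hc_time j)) (null_enum j)"
    unfolding hc_piece_def by (intro funpow_Top_funpow_Ssq_ge zero_below_3_null_enum) simp
  also have "\<dots> = (\<lambda>_. 0)"
    using \<open>hc_time j + kill_time j \<le> hc_time k\<close>
    by (intro funpow_Top_eq_0_mono[OF funpow_Top_kill_time]) simp
  finally show ?thesis using True by simp
next
  case False
  then have "hc_time k \<le> hc_time j"
    using gap_seq_gap[of k j kill_time decay_time] by (cases "j = k") (simp_all add: hc_time_def)
  then show ?thesis
    using False by (simp add: hc_piece_def funpow_Top_funpow_Ssq_le zero_below_3_null_enum)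
qed

lemma funpow_Top_hc_vector:
  assumes "m < M"
  shows "(Top ^^ hc_time k) hc_vector m
    = (\<Sum>j<2 ^ hc_time k * M + k + 1. (Top ^^ hc_time k) (hc_piece j) m)"
proof -
  have "(Top ^^ hc_time k) hc_vector m
      = (Top ^^ hc_time k) (\<lambda>i. \<Sum>j<2 ^ hc_time k * M + k + 1. hc_piece j i) m"
  proof (rule funpow_Top_local)
    fix i assume "i \<le> 2 ^ hc_time k * m"
    also have "\<dots> \<le> 2 ^ hc_time k * M" using assms by simp
    also have "\<dots> \<le> 2 ^ hc_time k * M + k + 1" by simp
    finally show "hc_vector i = (\<Sum>j<2 ^ hc_time k * M + k + 1. hc_piece j i)"
      by (rule hc_vector_eq_sum)
  qed
  then show ?thesis by (simp only: funpow_Top_sum)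
qed

lemma
  shows Xw_funpow_Top_hc_vector_diff: "(Top ^^ hc_time k) hc_vector - null_enum k \<in> Xw \<omega>"
    and wnorm_funpow_Top_hc_vector_diff:
      "wnorm \<omega> ((Top ^^ hc_time k) hc_vector - null_enum k) \<le> (1/2) ^ k"
proof -
  define x where "x j = (if k < j then (Ssq ^^ (hc_time j - hc_time k)) (null_enum j) else (\<lambda>_. 0))"
    for j
  have x_Xw: "x j \<in> Xw \<omega>" for j
    using Xw_funpow_Ssq[OF zero_below_3_null_enum finite_support_null_enum]
    by (auto simp: x_def Xw_def)
  have x_le: "wnorm \<omega> (x j) \<le> (if k < j then (1/2) ^ j else 0)" for j
  proof (cases "k < j")
    case True
    then have "decay_time j \<le> hc_time j - hc_time k"
      using gap_seq_gap[OF True, of kill_time decay_time] by (simp add: hc_time_def)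
    then show ?thesis using True by (simp add: x_def wnorm_funpow_Ssq_decay_time)
  qed (simp add: x_def wnorm_def)
  have "zero_below_3 ((Top ^^ hc_time k) hc_vector - null_enum k)"
    using zero_below_3_funpow_Top[OF zero_below_3_Xw[OF hc_vector_Xw]] zero_below_3_null_enum
    by (simp add: zero_below_3_def)
  moreover have "\<exists>K. \<forall>m<M. ((Top ^^ hc_time k) hc_vector - null_enum k) m = (\<Sum>j<K. x j m)" for M
  proof (intro exI allI impI)
    fix m assume "m < M"
    define K where "K = 2 ^ hc_time k * M + k + 1"
    have "(Top ^^ hc_time k) (hc_piece j) m = x j m + (if j = k then null_enum k m else 0)" for j
      by (cases j k rule: linorder_cases) (simp_all add: funpow_Top_hc_piece x_def)
    then have "(Top ^^ hc_time k) hc_vector m = (\<Sum>j<K. x j m) + null_enum k m"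
      using funpow_Top_hc_vector[OF \<open>m < M\<close>, of k] by (simp add: K_def sum.distrib)
    then show "((Top ^^ hc_time k) hc_vector - null_enum k) m = (\<Sum>j<K. x j m)"
      by simp
  qed
  moreover have "(\<Sum>j<K. wnorm \<omega> (x j)) \<le> (1/2) ^ k" for K
  proof -
    have "(\<Sum>j<K. wnorm \<omega> (x j)) \<le> (\<Sum>j<K. if k < j then (1/2) ^ j else 0)"
      by (intro sum_mono x_le)
    also have "\<dots> = (\<Sum>j\<in>{j\<in>{..<K}. k < j}. (1/2) ^ j)"
      by (rule sum.inter_filter[symmetric]) simp
    also have "\<dots> \<le> 2 * (1/2) ^ Suc k"
      by (rule sum_half_powers_le) auto
    finally show ?thesis by simp
  qed
  ultimately show "(Top ^^ hc_time k) hc_vector - null_enum k \<in> Xw \<omega>"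
    and "wnorm \<omega> ((Top ^^ hc_time k) hc_vector - null_enum k) \<le> (1/2) ^ k"
    using wnorm_series_le[where x = x and B = "(1/2) ^ k"] x_Xw by blast+
qed

theorem hypercyclic: "hypercyclic_Top \<omega>"
  unfolding hypercyclic_Top_def
proof (intro bexI[OF _ hc_vector_Xw] ballI allI impI)
  fix g and \<epsilon> :: real
  assume "g \<in> Xw \<omega>" and "0 < \<epsilon>"
  obtain K where K: "(1/2) ^ K < \<epsilon> / 2"
    using real_arch_pow_inv[of "\<epsilon> / 2" "1/2"] \<open>0 < \<epsilon>\<close> by auto
  obtain y where "y \<in> null_polys" and y: "wnorm \<omega> (g - y) < \<epsilon> / 2"
    using null_polys_dense[OF \<open>g \<in> Xw \<omega>\<close>, of "\<epsilon> / 2"] \<open>0 < \<epsilon>\<close> by auto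
  obtain k where "K \<le> k" and "null_enum k = y"
    using null_enum_frequently[OF \<open>y \<in> null_polys\<close>] by blast
  have "(1/2) ^ k \<le> ((1/2) ^ K :: real)"
    using \<open>K \<le> k\<close> by (intro power_decreasing) auto
  let ?f = "(Top ^^ hc_time k) hc_vector"
  have split: "?f - g = (\<lambda>m. (?f - y) m + (y - g) m)"
    by (auto simp: fun_diff_def)
  have "wnorm \<omega> (?f - g) \<le> wnorm \<omega> (?f - y) + wnorm \<omega> (y - g)"
    using Xw_funpow_Top_hc_vector_diff[of k, unfolded \<open>null_enum k = y\<close>]
      Xw_diff[OF null_polys_Xw[OF \<open>y \<in> null_polys\<close>] \<open>g \<in> Xw \<omega>\<close>]
    unfolding split by (rule wnorm_add_le)
  also have "\<dots> < \<epsilon>"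
    using wnorm_funpow_Top_hc_vector_diff[of k, unfolded \<open>null_enum k = y\<close>]
      y wnorm_minus_commute[of \<omega> g y] K \<open>(1/2) ^ k \<le> (1/2) ^ K\<close> by linarith
  finally show "\<exists>n. wnorm \<omega> ((Top ^^ n) hc_vector - g) < \<epsilon>" by blast
qed

end

lemma hypercyclic_Top_if_tendsto:
  assumes "bounded_below_weight \<omega>"
    and "\<forall>k\<ge>3. filterlim (\<lambda>n. \<omega> (k * 2 ^ n)) at_top sequentially"
  shows "hypercyclic_Top \<omega>"
proof -
  obtain \<delta> where "0 < \<delta>" and "\<forall>n\<ge>1. \<delta> \<le> \<omega> n"
    using assms(1) by (auto simp: bounded_below_weight_def)
  then interpret dyadic_growth_weight \<omega> \<delta>
    using assms(2) by unfold_locales auto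
  show ?thesis by (rule hypercyclic)
qed

lemma filterlim_\<omega>\<^sub>0: "filterlim (\<lambda>n. \<omega>\<^sub>0 (k * 2 ^ n)) at_top sequentially" if "1 \<le> k"
proof (rule filterlim_at_top_mono)
  show "filterlim (\<lambda>n. real n * (1 / pi)) at_top sequentially"
    by (rule filterlim_at_top_mult_tendsto_pos[OF tendsto_const _ filterlim_real_sequentially]) simp
  have "real n * (1 / pi) \<le> \<omega>\<^sub>0 (k * 2 ^ n)" for n
  proof -
    have "(2::nat) ^ n \<le> k * 2 ^ n" using that by simp
    then have "n \<le> k * 2 ^ n" using less_exp[of n] by linarith
    then have "real n \<le> real (k * 2 ^ n)" by (simp only: of_nat_le_iff)
    then show ?thesis by (simp add: \<omega>\<^sub>0_def divide_right_mono)
  qed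
  then show "\<forall>\<^sub>F n in sequentially. real n * (1 / pi) \<le> \<omega>\<^sub>0 (k * 2 ^ n)" by simp
qed

theorem theorem3p4:
  shows "(\<forall>\<omega>. weight \<omega> \<and> bounded_below_weight \<omega>
            \<and> (\<forall>k\<ge>3. filterlim (\<lambda>n. \<omega> (k * 2 ^ n)) at_top sequentially)
            \<and> Top_bounded \<omega>
          \<longrightarrow> hypercyclic_Top \<omega>)
         \<and> hypercyclic_Top \<omega>\<^sub>0"
proof
  show "\<forall>\<omega>. weight \<omega> \<and> bounded_below_weight \<omega>
            \<and> (\<forall>k\<ge>3. filterlim (\<lambda>n. \<omega> (k * 2 ^ n)) at_top sequentially)
            \<and> Top_bounded \<omega>
          \<longrightarrow> hypercyclic_Top \<omega>"
    \<comment> \<open>\<^const>\<open>weight\<close> follows from \<^const>\<open>bounded_below_weight\<close>\<close>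
    using hypercyclic_Top_if_tendsto by blast
  have "bounded_below_weight \<omega>\<^sub>0"
    unfolding bounded_below_weight_def \<omega>\<^sub>0_def
    by (intro exI[of _ "1 / pi"]) (auto simp: divide_right_mono)
  then show "hypercyclic_Top \<omega>\<^sub>0"
    using filterlim_\<omega>\<^sub>0 by (intro hypercyclic_Top_if_tendsto) auto
qed

end
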